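(* Let $\eta>0$, $T>0$, and let $N$ be a standard Gaussian random variable. Let $\beta\in[0,+\infty]$, $\theta>0$, $v>0$, and let $f$ be a measurable function which is bounded from below on $[0,\beta]$. Let $u$ be any real number if $\beta=+\infty$, and $u=-v\beta$ if $\beta<+\infty$. Write $\omega=W(\theta v\eta^2T)$, where $W$ is the Lambert function, and suppose that $$\frac{\omega}{\eta^{2}T}+\frac{\omega^2}{2\eta^{2}T}\leq \theta v\beta .$$ Define $$L_{f,\beta}(\theta)=\mathbb{E}\left(\exp\left(-\theta f\left(e^{\eta\sqrt{T}N}\right)1_{e^{\eta\sqrt{T}N}\leq\beta}\right)\right).$$ Then $L_{f,\beta}(\theta)=L_\beta(\theta)\,I_{f,\beta}(\theta)$, where $$L_\beta(\theta)=\exp\left(-\left(\theta u+\frac{\omega}{\eta^{2}T}+\frac{\omega^2}{2\eta^{2}T}\right)\right),$$ $$I_{f,\beta}(\theta)=\mathbb{E}\left(\exp\left[-\theta\left(f\left(\frac{\omega}{\theta v\eta^2T}e^{\eta\sqrt{T}N}\right)-u-\frac{\omega}{\theta\eta^2T}e^{\eta\sqrt{T}N}\right)1_{N\leq \frac{\ln\beta}{\eta\sqrt{T}}+\frac{\omega}{\eta\sqrt{T}}}\right]\phi_\beta(N,\theta)\right),$$ $$\phi_\beta(y,\theta)=\exp\left(-\frac{\omega}{\eta^2T}\left(e^{\eta\sqrt{T}y}-1-\eta\sqrt{T}y\right)\right)\exp\left(\left(\frac{\omega}{\eta^2T}e^{\eta\sqrt{T}y}-\theta v\beta\right)_+\right),$$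 with the conventions $\ln(+\infty)=+\infty$, $\ln 0=-\infty$ and $(-\infty)_+=0$.
   Context: The Lambert function $W:(-1/e,+\infty)\to(-1,+\infty)$ is the inverse of the strictly increasing bijection $x\in(-1,+\infty)\mapsto xe^x\in(-1/e,+\infty)$. For real $x$, $x_+=\max(x,0)$. When $\beta=+\infty$, the indicator $1_{e^{\eta\sqrt T N}\le\beta}$ is identically $1$ and the hypothesis inequality holds trivially. *)

theory Defs
  imports "HOL-Probability.Probability"
begin

definition lambertW :: "real \<Rightarrow> real" where
  "lambertW y = (THE w. w > -1 \<and> w * exp w = y)"

definition ereal_ln :: "ereal \<Rightarrow> ereal" where
  "ereal_ln b = (if b = \<infinity> then \<infinity> else if b \<le> 0 then -\<infinity> else ereal (ln (real_of_ereal b)))"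

definition ereal_pos_part :: "ereal \<Rightarrow> real" where
  "ereal_pos_part x = real_of_ereal (max x 0)"

end

theory Submission
  imports Defs
begin

(*
  Cameron-Martin shift: for standard Gaussian N and every m, E g(N) = E g(N - m) exp(m N - m^2/2).
  Take m = omega / (eta sqrt T). Since omega e^omega = theta v eta^2 T, the shifted exponential
  e^(eta sqrt T (N - m)) equals e^(-omega) e^(eta sqrt T N), the argument of f on the right, and
  the event {e^(eta sqrt T (N - m)) <= beta} becomes {N <= ln beta / (eta sqrt T) + m}.
  The tilt factor exp(m N - m^2/2) then splits as L_beta times
  exp(-omega/(eta^2 T) (e^(eta sqrt T N) - 1 - eta sqrt T N)) times exp(theta (u + v e^(-omega) e^(eta sqrt T N)));
  on the event the last factor is absorbed by the first factor of I_{f,beta}, off it by the positive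
  part in phi_beta.
*)

lemma mult_exp_strict_mono:
  fixes a b :: real
  assumes "-1 \<le> a" and "a < b"
  shows "a * exp a < b * exp b"
proof (rule DERIV_pos_imp_increasing_open[OF \<open>a < b\<close>])
  fix x assume "a < x" "x < b"
  have "DERIV (\<lambda>w. w * exp w) x :> (1 + x) * exp x"
    by (auto intro!: derivative_eq_intros simp: algebra_simps)
  moreover have "(1 + x) * exp x > 0"
    using \<open>a < x\<close> assms(1) by simp
  ultimately show "\<exists>y. DERIV (\<lambda>w. w * exp w) x :> y \<and> y > 0" by blast
qed (intro continuous_intros)

lemma lambertW_eqI:
  fixes w y :: real
  assumes "w > -1" and "w * exp w = y"
  shows "lambertW y = w"
  unfolding lambertW_def
proof (rule the_equality)
  fix z assume z: "z > -1 \<and> z * exp z = y"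
  show "z = w"
    using mult_exp_strict_mono[of z w] mult_exp_strict_mono[of w z] z assms
    by (cases z w rule: linorder_cases) auto
qed (use assms in auto)

lemma
  fixes y :: real
  assumes "y > 0"
  shows lambertW_pos: "lambertW y > 0"
    and lambertW_mult_exp: "lambertW y * exp (lambertW y) = y"
proof -
  obtain w where w: "0 \<le> w" "w * exp w = y"
    using IVT'[of "\<lambda>w. w * exp w" 0 y y] assms by (force intro: continuous_intros)
  with assms have "w > 0" by (cases "w = 0") auto
  with w show "lambertW y > 0" and "lambertW y * exp (lambertW y) = y"
    using lambertW_eqI[of w y] by auto
qed

lemma std_normal_density_shift:
  "std_normal_density (y - m) = std_normal_density y * exp (m * y - m\<^sup>2 / 2)"
  unfolding std_normal_density_def
  by (simp add: mult_exp_exp power2_eq_square algebra_simps add_divide_distrib diff_divide_distrib)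

lemma nn_integral_std_normal_shift:
  assumes N: "distributed M lborel N (\<lambda>x. ennreal (std_normal_density x))"
    and g[measurable]: "g \<in> borel_measurable borel"
  shows "(\<integral>\<^sup>+x. g (N x) \<partial>M) = (\<integral>\<^sup>+x. g (N x - m) * ennreal (exp (m * N x - m\<^sup>2 / 2)) \<partial>M)"
proof -
  have "(\<integral>\<^sup>+x. g (N x) \<partial>M) = (\<integral>\<^sup>+y. ennreal (std_normal_density y) * g y \<partial>lborel)"
    by (rule distributed_nn_integral[OF N, symmetric]) simp
  also have "\<dots> = (\<integral>\<^sup>+y. ennreal (std_normal_density (y - m)) * g (y - m) \<partial>lborel)"
    by (subst nn_integral_real_affine[where c=1 and t="-m"]) auto
  also have "\<dots> = (\<integral>\<^sup>+y. ennreal (std_normal_density y) * (g (y - m) * ennreal (exp (m * y - m\<^sup>2 / 2))) \<partial>lborel)"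
    by (simp add: std_normal_density_shift ennreal_mult mult_ac)
  also have "\<dots> = (\<integral>\<^sup>+x. g (N x - m) * ennreal (exp (m * N x - m\<^sup>2 / 2)) \<partial>M)"
    by (rule distributed_nn_integral[OF N]) simp
  finally show ?thesis .
qed

lemma borel_measurable_ereal_pos_part [measurable]: "ereal_pos_part \<in> borel_measurable borel"
  unfolding ereal_pos_part_def by measurable

lemma ereal_le_ln_div_iff:
  fixes s y c :: real and \<beta> :: ereal
  assumes s: "s > 0" and \<beta>: "0 \<le> \<beta>"
  shows "ereal y \<le> ereal_ln \<beta> / ereal s + ereal (c / s) \<longleftrightarrow> ereal (exp (s * y - c)) \<le> \<beta>"
proof (cases \<beta>)
  case (real b)
  show ?thesis
  proof (cases "b = 0")
    case True
    then show ?thesis using real s by (simp add: ereal_ln_def)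
  next
    case False
    with real \<beta> have b: "b > 0" by simp
    have "ereal y \<le> ereal_ln \<beta> / ereal s + ereal (c / s) \<longleftrightarrow> y \<le> ln b / s + c / s"
      using real b s by (simp add: ereal_ln_def)
    also have "\<dots> \<longleftrightarrow> s * y - c \<le> ln b" using s by (simp add: field_simps)
    also have "\<dots> \<longleftrightarrow> exp (s * y - c) \<le> b" using b by (metis exp_le_cancel_iff exp_ln)
    finally show ?thesis using real by simp
  qed
qed (use assms in \<open>simp_all add: ereal_ln_def\<close>)

lemma ereal_pos_part_scaled_excess:
  fixes a X :: real and \<beta> :: ereal
  assumes a: "a > 0" and \<beta>: "0 \<le> \<beta>"
  shows "ereal_pos_part (ereal (a * X) - ereal a * \<beta>)
           = (if ereal X \<le> \<beta> then 0 else a * (X - real_of_ereal \<beta>))"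
proof (cases \<beta>)
  case (real b)
  have "a * X \<le> a * b \<longleftrightarrow> X \<le> b" using a by simp
  then show ?thesis using real by (auto simp: ereal_pos_part_def max_def algebra_simps)
qed (use assms in \<open>auto simp: ereal_pos_part_def ereal_mult_infty\<close>)

lemma exp_tilt_identity:
  fixes \<theta> u v c s m E X y F :: real
  assumes cE: "c * E = \<theta> * v * X" and cs: "c * s = m"
  shows "exp (- \<theta> * F * (if A then 1 else 0)) * exp (m * y - m\<^sup>2 / 2)
       = exp (- (\<theta> * u + c + m\<^sup>2 / 2)) *
         (exp (- \<theta> * (F - u - v * X) * (if A then 1 else 0))
          * (exp (- c * (E - 1 - s * y)) * exp (if A then 0 else \<theta> * v * X + \<theta> * u)))"
  unfolding mult_exp_exp
proof (rule arg_cong[where f = exp])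
  have "c * (E - 1 - s * y) = \<theta> * v * X - c - m * y"
    using cE cs by (simp add: algebra_simps)
  then show "- \<theta> * F * (if A then 1 else 0) + (m * y - m\<^sup>2 / 2)
     = - (\<theta> * u + c + m\<^sup>2 / 2) + (- \<theta> * (F - u - v * X) * (if A then 1 else 0)
        + (- c * (E - 1 - s * y) + (if A then 0 else \<theta> * v * X + \<theta> * u)))"
    by (simp add: algebra_simps)
qed

lemma tilted_integrand_eq:
  fixes \<eta> T \<theta> v u y :: real and \<beta> :: ereal and f :: "real \<Rightarrow> real"
  assumes \<eta>: "\<eta> > 0" and T: "T > 0" and \<theta>: "\<theta> > 0" and v: "v > 0" and \<beta>: "0 \<le> \<beta>"
    and u: "\<beta> \<noteq> \<infinity> \<Longrightarrow> u = - v * real_of_ereal \<beta>"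
  defines "\<omega> \<equiv> lambertW (\<theta> * v * \<eta>\<^sup>2 * T)" and "s \<equiv> \<eta> * sqrt T"
  shows "exp (- \<theta> * f (exp (s * (y - \<omega> / s))) * (if ereal (exp (s * (y - \<omega> / s))) \<le> \<beta> then 1 else 0))
           * exp (\<omega> / s * y - (\<omega> / s)\<^sup>2 / 2)
       = exp (- (\<theta> * u + \<omega> / (\<eta>\<^sup>2 * T) + \<omega>\<^sup>2 / (2 * \<eta>\<^sup>2 * T))) *
         (exp (- \<theta> * (f (\<omega> / (\<theta> * v * \<eta>\<^sup>2 * T) * exp (s * y)) - u - \<omega> / (\<theta> * \<eta>\<^sup>2 * T) * exp (s * y))
                * (if ereal y \<le> ereal_ln \<beta> / ereal s + ereal (\<omega> / s) then 1 else 0))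
          * (exp (- (\<omega> / (\<eta>\<^sup>2 * T)) * (exp (s * y) - 1 - s * y))
             * exp (ereal_pos_part (ereal (\<omega> / (\<eta>\<^sup>2 * T) * exp (s * y)) - ereal (\<theta> * v) * \<beta>))))"
proof -
  define c where "c = \<omega> / (\<eta>\<^sup>2 * T)"
  define X where "X = exp (s * y - \<omega>)"
  have "\<theta> * v * \<eta>\<^sup>2 * T > 0" using \<eta> T \<theta> v by simp
  then have \<omega>: "\<omega> > 0" "\<omega> * exp \<omega> = \<theta> * v * \<eta>\<^sup>2 * T"
    unfolding \<omega>_def by (rule lambertW_pos lambertW_mult_exp)+
  have s: "s > 0" "s\<^sup>2 = \<eta>\<^sup>2 * T" using \<eta> T by (simp_all add: s_def power_mult_distrib)
  have exp_shift: "exp (s * (y - \<omega> / s)) = X"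
    using s by (simp add: X_def right_diff_distrib)
  have "\<omega> / (\<theta> * v * \<eta>\<^sup>2 * T) = exp (- \<omega>)"
    using \<omega> \<eta> T \<theta> v by (simp add: \<omega>(2)[symmetric] exp_minus field_simps)
  then have f_arg: "\<omega> / (\<theta> * v * \<eta>\<^sup>2 * T) * exp (s * y) = X"
    unfolding X_def exp_diff by (simp add: exp_minus divide_inverse mult.commute)
  have vX: "\<omega> / (\<theta> * \<eta>\<^sup>2 * T) * exp (s * y) = v * X"
    using f_arg[symmetric] v by (simp add: field_simps)
  have cE: "c * exp (s * y) = \<theta> * v * X"
    using f_arg[symmetric] v \<theta> by (simp add: c_def field_simps)
  have cs: "c * s = \<omega> / s" and m2: "(\<omega> / s)\<^sup>2 / 2 = \<omega>\<^sup>2 / (2 * \<eta>\<^sup>2 * T)"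
    using s \<eta> T by (simp_all add: c_def power2_eq_square field_simps)
  have ind: "ereal y \<le> ereal_ln \<beta> / ereal s + ereal (\<omega> / s) \<longleftrightarrow> ereal X \<le> \<beta>"
    unfolding X_def using s(1) \<beta> by (rule ereal_le_ln_div_iff)
  have pos: "ereal_pos_part (ereal (c * exp (s * y)) - ereal (\<theta> * v) * \<beta>)
               = (if ereal X \<le> \<beta> then 0 else \<theta> * v * X + \<theta> * u)"
  proof -
    have "\<theta> * v * (X - real_of_ereal \<beta>) = \<theta> * v * X + \<theta> * u" if "\<not> ereal X \<le> \<beta>"
      using that u by (cases \<beta>) (auto simp: algebra_simps)
    then show ?thesis
      unfolding cE using ereal_pos_part_scaled_excess[of "\<theta> * v" \<beta> X] \<theta> v \<beta> by auto
  qed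
  show ?thesis
    using exp_tilt_identity[where A = "ereal X \<le> \<beta>" and F = "f X" and y = y and u = u, OF cE cs]
    unfolding exp_shift f_arg vX ind c_def[symmetric] pos m2 by simp
qed

theorem theorem1:
  fixes M :: "'a measure" and N :: "'a \<Rightarrow> real"
    and \<eta> T \<theta> v u :: real and \<beta> :: ereal and f :: "real \<Rightarrow> real"
  assumes M: "prob_space M"
    and N: "distributed M lborel N (\<lambda>x. ennreal (std_normal_density x))"
    and \<eta>: "\<eta> > 0" and T: "T > 0" and \<theta>: "\<theta> > 0" and v: "v > 0"
    and \<beta>: "0 \<le> \<beta>"
    and f_meas: "f \<in> borel_measurable borel"
    and f_bdd: "\<exists>c. \<forall>x. 0 \<le> x \<and> ereal x \<le> \<beta> \<longrightarrow> c \<le> f x"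
    and u: "\<beta> \<noteq> \<infinity> \<Longrightarrow> u = - v * real_of_ereal \<beta>"
    and hyp: "ereal (lambertW (\<theta> * v * \<eta>\<^sup>2 * T) / (\<eta>\<^sup>2 * T)
                 + (lambertW (\<theta> * v * \<eta>\<^sup>2 * T))\<^sup>2 / (2 * \<eta>\<^sup>2 * T)) \<le> ereal (\<theta> * v) * \<beta>"
  shows
    "(let \<omega> = lambertW (\<theta> * v * \<eta>\<^sup>2 * T);
          s = \<eta> * sqrt T;
          L\<^sub>\<beta> = exp (- (\<theta> * u + \<omega> / (\<eta>\<^sup>2 * T) + \<omega>\<^sup>2 / (2 * \<eta>\<^sup>2 * T)));
          \<phi> = (\<lambda>y. exp (- (\<omega> / (\<eta>\<^sup>2 * T)) * (exp (s * y) - 1 - s * y))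
                   * exp (ereal_pos_part (ereal (\<omega> / (\<eta>\<^sup>2 * T) * exp (s * y)) - ereal (\<theta> * v) * \<beta>)))
      in (\<integral>\<^sup>+ x. ennreal (exp (- \<theta> * f (exp (s * N x))
                    * (if ereal (exp (s * N x)) \<le> \<beta> then 1 else 0))) \<partial>M)
         = ennreal L\<^sub>\<beta> *
           (\<integral>\<^sup>+ x. ennreal (exp (- \<theta> * (f (\<omega> / (\<theta> * v * \<eta>\<^sup>2 * T) * exp (s * N x)) - u
                    - \<omega> / (\<theta> * \<eta>\<^sup>2 * T) * exp (s * N x))
                    * (if ereal (N x) \<le> ereal_ln \<beta> / ereal s + ereal (\<omega> / s) then 1 else 0))
                   * \<phi> (N x)) \<partial>M))"
proof -
  define \<omega> where "\<omega> = lambertW (\<theta> * v * \<eta>\<^sup>2 * T)"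
  define s where "s = \<eta> * sqrt T"
  define m where "m = \<omega> / s"
  define L where "L = exp (- (\<theta> * u + \<omega> / (\<eta>\<^sup>2 * T) + \<omega>\<^sup>2 / (2 * \<eta>\<^sup>2 * T)))"
  define G where "G = (\<lambda>y. exp (- \<theta> * f (exp (s * y)) * (if ereal (exp (s * y)) \<le> \<beta> then 1 else 0)))"
  define H where "H = (\<lambda>y. exp (- \<theta> * (f (\<omega> / (\<theta> * v * \<eta>\<^sup>2 * T) * exp (s * y)) - u
                    - \<omega> / (\<theta> * \<eta>\<^sup>2 * T) * exp (s * y))
                    * (if ereal y \<le> ereal_ln \<beta> / ereal s + ereal (\<omega> / s) then 1 else 0))
                  * (exp (- (\<omega> / (\<eta>\<^sup>2 * T)) * (exp (s * y) - 1 - s * y))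
                     * exp (ereal_pos_part (ereal (\<omega> / (\<eta>\<^sup>2 * T) * exp (s * y)) - ereal (\<theta> * v) * \<beta>))))"
  note [measurable] = f_meas
  have [measurable]: "G \<in> borel_measurable borel"
    unfolding G_def by measurable
  have [measurable]: "H \<in> borel_measurable borel"
    unfolding H_def by measurable
  note [measurable] = distributed_measurable[OF N, simplified]
  have tilt: "G (y - m) * exp (m * y - m\<^sup>2 / 2) = L * H y" for y
    unfolding G_def H_def L_def m_def \<omega>_def s_def
    by (rule tilted_integrand_eq[OF \<eta> T \<theta> v \<beta>]) (rule u)
  have "0 \<le> L" by (simp add: L_def)
  have "(\<integral>\<^sup>+x. ennreal (G (N x)) \<partial>M)
      = (\<integral>\<^sup>+x. ennreal (G (N x - m)) * ennreal (exp (m * N x - m\<^sup>2 / 2)) \<partial>M)"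
    by (rule nn_integral_std_normal_shift[OF N, of "\<lambda>y. ennreal (G y)"]) measurable
  also have "\<dots> = (\<integral>\<^sup>+x. ennreal L * ennreal (H (N x)) \<partial>M)"
    by (simp only: ennreal_mult''[symmetric] exp_ge_zero tilt ennreal_mult'[OF \<open>0 \<le> L\<close>])
  also have "\<dots> = ennreal L * (\<integral>\<^sup>+x. ennreal (H (N x)) \<partial>M)"
    by (rule nn_integral_cmult) measurable
  finally show ?thesis
    unfolding Let_def G_def H_def L_def \<omega>_def s_def .
qed

end
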